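(* Let $c\in C^\infty(\mathbb R)$ and let $u$ satisfy $u_t=uu_1+\hbar^2c(u)u_1^3$ (with $u_k=\partial_x^ku$). Define the polynomial Miura map $$\begin{aligned}v={}&u-\hbar^2cu_1^2+\hbar^4\Big(\tfrac43cc'u_1^4+2c^2u_1^2u_2\Big)\\&+\hbar^6\Big(-\tfrac{28}{15}c{c'}^2u_1^6-\tfrac{14}{15}c^2c''u_1^6-\tfrac{26}{3}c^2c'u_1^4u_2-4c^3u_1^2u_2^2-\tfrac43c^3u_1^3u_3\Big)\\&+\hbar^8\Big(\tfrac{836}{315}c{c'}^3u_1^8+\tfrac{1268}{315}c^2c'c''u_1^8+\tfrac{16}{35}c^3c'''u_1^8+\tfrac{1138}{45}c^2{c'}^2u_1^6u_2+\tfrac{128}{15}c^3c''u_1^6u_2\\&\qquad+\tfrac{112}{3}c^3c'u_1^4u_2^2+8c^4u_1^2u_2^3+8c^3c'u_1^5u_3+8c^4u_1^3u_2u_3+\tfrac23c^4u_1^4u_4\Big),\end{aligned}$$ where $c$ and its derivatives are evaluated at $u$. Then $v_t-vv_x=O(\hbar^{10})$ as a formal expansion in $\hbar$; i.e. the equation $u_t=uu_x+\hbar^2c(u)u_x^3$ is trivial (polynomially Miura-equivalent to the Monge equation $v_t=vv_x$) up to $O(\hbar^8)$.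
   Context: $\hbar$ is a formal parameter; primes on $c$ denote derivatives with respect to $u$; $v_t$ is computed by the chain rule using the evolution equation for $u$. *)

theory Defs
  imports "HOL-Analysis.Analysis" "HOL-Library.Landau_Symbols"
begin

definition smooth :: "(real \<Rightarrow> real) \<Rightarrow> bool" where
  "smooth f \<longleftrightarrow> (\<forall>k x. ((deriv ^^ k) f) differentiable (at x))"

definition flow :: "(real \<Rightarrow> real) \<Rightarrow> real \<Rightarrow> (real \<Rightarrow> real) \<Rightarrow> real \<Rightarrow> real" where
  "flow c h w x = w x * deriv w x + h^2 * c (w x) * (deriv w x)^3"

definition miura :: "(real \<Rightarrow> real) \<Rightarrow> real \<Rightarrow> (real \<Rightarrow> real) \<Rightarrow> real \<Rightarrow> real" where
  "miura c h w x =
    (let u = w x; u1 = (deriv ^^ 1) w x; u2 = (deriv ^^ 2) w x;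
         u3 = (deriv ^^ 3) w x; u4 = (deriv ^^ 4) w x;
         c0 = c u; c1 = (deriv ^^ 1) c u; c2 = (deriv ^^ 2) c u; c3 = (deriv ^^ 3) c u
     in u - h^2 * c0 * u1^2
        + h^4 * (4/3 * c0 * c1 * u1^4 + 2 * c0^2 * u1^2 * u2)
        + h^6 * (- 28/15 * c0 * c1^2 * u1^6 - 14/15 * c0^2 * c2 * u1^6
                 - 26/3 * c0^2 * c1 * u1^4 * u2 - 4 * c0^3 * u1^2 * u2^2
                 - 4/3 * c0^3 * u1^3 * u3)
        + h^8 * (836/315 * c0 * c1^3 * u1^8 + 1268/315 * c0^2 * c1 * c2 * u1^8
                 + 16/35 * c0^3 * c3 * u1^8 + 1138/45 * c0^2 * c1^2 * u1^6 * u2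
                 + 128/15 * c0^3 * c2 * u1^6 * u2 + 112/3 * c0^3 * c1 * u1^4 * u2^2
                 + 8 * c0^4 * u1^2 * u2^3 + 8 * c0^3 * c1 * u1^5 * u3
                 + 8 * c0^4 * u1^3 * u2 * u3 + 2/3 * c0^4 * u1^4 * u4))"

text \<open>v_t by the chain rule: the variation of v[u] in the direction of u_t = flow,
  i.e. d/ds v[u + s * flow] at s = 0.\<close>
definition miura_t :: "(real \<Rightarrow> real) \<Rightarrow> real \<Rightarrow> (real \<Rightarrow> real) \<Rightarrow> real \<Rightarrow> real" where
  "miura_t c h u x = deriv (\<lambda>s. miura c h (\<lambda>y. u y + s * flow c h u y) x) 0"

end

theory Submission
  imports Defs "HOL-Computational_Algebra.Polynomial"
begin

(* At a fixed point x the jets c^(k)(u(x)) and u_k(x) do not depend on h. In terms of these jets,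
   v, v_x and v_t are polynomials in h^2 with explicit polynomial coefficients; v_t is obtained
   from the chain rule, which needs the first four x-derivatives of the flow. Comparing
   coefficients shows that v_t and v v_x agree up to h^8, so v_t - v v_x is h^10 times a
   polynomial in h. *)

lemma higher_deriv_eqI:
  fixes F :: "nat \<Rightarrow> real \<Rightarrow> real"
  assumes "\<And>k y. k < n \<Longrightarrow> (F k has_real_derivative F (Suc k) y) (at y)" and "k \<le> n"
  shows "(deriv ^^ k) (F 0) = F k"
  using \<open>k \<le> n\<close>
proof (induction k)
  case (Suc k)
  then have "(deriv ^^ k) (F 0) = F k" by simp
  moreover have "deriv (F k) = F (Suc k)"
    using DERIV_imp_deriv[OF assms(1)] Suc.prems by (simp add: fun_eq_iff)
  ultimately show ?case by simp
qed simp

lemma poly_bigo_at_0: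
  fixes p :: "'a::real_normed_field poly"
  assumes "\<And>i. i < n \<Longrightarrow> coeff p i = 0"
  shows "poly p \<in> O[at 0](\<lambda>x. x ^ n)"
proof -
  obtain q where p: "p = monom 1 n * q"
    using assms monom_1_dvd_iff' by blast
  have "((\<lambda>x. poly p x / x ^ n) \<longlongrightarrow> poly q 0) (at 0)"
  proof (rule Lim_transform_eventually)
    show "((\<lambda>x. poly q x) \<longlongrightarrow> poly q 0) (at 0)"
      by (intro tendsto_intros)
    show "\<forall>\<^sub>F x in at 0. poly q x = poly p x / x ^ n"
      by (auto simp: p poly_monom eventually_at_filter)
  qed
  moreover have "\<forall>\<^sub>F x in at 0. x ^ n \<noteq> (0::'a)"
    by (rule eventually_mono[OF eventually_neq_at_within[of 0]]) simp
  ultimately show ?thesis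
    by (rule bigoI_tendsto)
qed

lemma filterlim_power_at_0:
  fixes n :: nat
  assumes "n > 0"
  shows "filterlim (\<lambda>x::'a::real_normed_field. x ^ n) (at 0) (at 0)"
proof -
  have "((\<lambda>x::'a. x ^ n) \<longlongrightarrow> 0) (at 0)"
    using assms by (auto intro!: tendsto_eq_intros)
  moreover have "\<forall>\<^sub>F x in at 0. (x::'a) ^ n \<noteq> 0"
    by (rule eventually_mono[OF eventually_neq_at_within[of 0]]) simp
  ultimately show ?thesis
    by (simp add: filterlim_at)
qed

definition jet :: "(real \<Rightarrow> real) \<Rightarrow> real \<Rightarrow> nat \<Rightarrow> real" where
  "jet f y k = (deriv ^^ k) f y"

lemma jet_0 [simp]: "jet f y 0 = f y"
  by (simp add: jet_def)

(* The derivative is given by an equation so that these rules combine with derivative_eq_intros.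
   Afterwards simp leaves the index 1 + 1 as Suc (Suc 0); numeral_2_eq_2 folds it back to 2. *)
lemma has_real_derivative_jet:
  assumes "smooth f" and "E = jet f y (k + 1)"
  shows "((\<lambda>y. jet f y k) has_real_derivative E) (at y within S)"
proof -
  have "((deriv ^^ k) f has_real_derivative (deriv ^^ Suc k) f y) (at y)"
    using assms(1) unfolding smooth_def by (simp add: DERIV_deriv_iff_real_differentiable)
  then show ?thesis
    using assms(2) unfolding jet_def by (simp add: has_field_derivative_at_within)
qed

lemma has_real_derivative_smooth:
  assumes "smooth f"
  shows "(f has_real_derivative jet f y 1) (at y within S)"
  using has_real_derivative_jet[OF assms, of "jet f y 1" y 0] by (simp add: jet_def)

lemma has_real_derivative_jet_comp:
  assumes "smooth f" and "(g has_real_derivative g') (at y within S)"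
    and "E = jet f (g y) (k + 1) * g'"
  shows "((\<lambda>y. jet f (g y) k) has_real_derivative E) (at y within S)"
  using DERIV_chain2[OF has_real_derivative_jet[OF assms(1) refl] assms(2)] assms(3) by simp

(* Polynomials in h^2 over jet variables: c k stands for c^(k)(u) and u k for u_k. *)
definition miura_series :: "(nat \<Rightarrow> real) \<Rightarrow> (nat \<Rightarrow> real) \<Rightarrow> real poly" where
  "miura_series c u =
    [: u 0,
       - c 0 * u 1^2,
       4/3 * c 0 * c 1 * u 1^4 + 2 * c 0^2 * u 1^2 * u 2,
       - 28/15 * c 0 * c 1^2 * u 1^6 - 14/15 * c 0^2 * c 2 * u 1^6
         - 26/3 * c 0^2 * c 1 * u 1^4 * u 2 - 4 * c 0^3 * u 1^2 * u 2^2
         - 4/3 * c 0^3 * u 1^3 * u 3,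
       836/315 * c 0 * c 1^3 * u 1^8 + 1268/315 * c 0^2 * c 1 * c 2 * u 1^8
         + 16/35 * c 0^3 * c 3 * u 1^8 + 1138/45 * c 0^2 * c 1^2 * u 1^6 * u 2
         + 128/15 * c 0^3 * c 2 * u 1^6 * u 2 + 112/3 * c 0^3 * c 1 * u 1^4 * u 2^2
         + 8 * c 0^4 * u 1^2 * u 2^3 + 8 * c 0^3 * c 1 * u 1^5 * u 3
         + 8 * c 0^4 * u 1^3 * u 2 * u 3 + 2/3 * c 0^4 * u 1^4 * u 4 :]"

lemma miura_eq_poly: "miura c h w x = poly (miura_series (jet c (w x)) (jet w x)) (h^2)"
  unfolding miura_def miura_series_def jet_def Let_def
  by simp algebra

lemma miura_series_cong:
  assumes "\<And>k. k \<le> 3 \<Longrightarrow> c k = c' k" and "\<And>k. k \<le> 4 \<Longrightarrow> u k = u' k"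
  shows "miura_series c u = miura_series c' u'"
  using assms by (simp add: miura_series_def)

definition miura_x_series :: "(nat \<Rightarrow> real) \<Rightarrow> (nat \<Rightarrow> real) \<Rightarrow> real poly" where
  "miura_x_series c u =
    [: u 1,
       - c 1 * u 1^3 - 2 * c 0 * u 1 * u 2,
       4/3 * c 0 * c 2 * u 1^5 + 4/3 * c 1^2 * u 1^5 + 28/3 * c 0 * c 1 * u 1^3 * u 2
         + 2 * c 0^2 * u 1^2 * u 3 + 4 * c 0^2 * u 1 * u 2^2,
       - 14/15 * c 0^2 * c 3 * u 1^7 - 28/5 * c 0 * c 1 * c 2 * u 1^7 - 28/15 * c 1^3 * u 1^7
         - 214/15 * c 0^2 * c 2 * u 1^5 * u 2 - 428/15 * c 0 * c 1^2 * u 1^5 * u 2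
         - 38/3 * c 0^2 * c 1 * u 1^4 * u 3 - 140/3 * c 0^2 * c 1 * u 1^3 * u 2^2
         - 4/3 * c 0^3 * u 1^3 * u 4 - 12 * c 0^3 * u 1^2 * u 2 * u 3 - 8 * c 0^3 * u 1 * u 2^3,
       16/35 * c 0^3 * c 4 * u 1^9 + 340/63 * c 0^2 * c 1 * c 3 * u 1^9
         + 1268/315 * c 0^2 * c 2^2 * u 1^9 + 5044/315 * c 0 * c 1^2 * c 2 * u 1^9
         + 836/315 * c 1^4 * u 1^9 + 256/21 * c 0^3 * c 3 * u 1^7 * u 2
         + 2276/21 * c 0^2 * c 1 * c 2 * u 1^7 * u 2 + 1508/21 * c 0 * c 1^3 * u 1^7 * u 2
         + 248/15 * c 0^3 * c 2 * u 1^6 * u 3 + 2218/45 * c 0^2 * c 1^2 * u 1^6 * u 3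
         + 1328/15 * c 0^3 * c 2 * u 1^5 * u 2^2 + 3956/15 * c 0^2 * c 1^2 * u 1^5 * u 2^2
         + 32/3 * c 0^3 * c 1 * u 1^5 * u 4 + 440/3 * c 0^3 * c 1 * u 1^4 * u 2 * u 3
         + 2/3 * c 0^4 * u 1^4 * u 5 + 544/3 * c 0^3 * c 1 * u 1^3 * u 2^3
         + 32/3 * c 0^4 * u 1^3 * u 2 * u 4 + 8 * c 0^4 * u 1^3 * u 3^2
         + 48 * c 0^4 * u 1^2 * u 2^2 * u 3 + 16 * c 0^4 * u 1 * u 2^4 :]"

lemma has_real_derivative_miura:
  assumes "smooth c" and "smooth u"
  shows "(miura c h u has_real_derivative poly (miura_x_series (jet c (u x)) (jet u x)) (h^2)) (at x)"
proof -
  have miura_fun: "miura c h u = (\<lambda>y. poly (miura_series (jet c (u y)) (jet u y)) (h^2))"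
    by (rule ext) (rule miura_eq_poly)
  show ?thesis
    unfolding miura_fun miura_series_def miura_x_series_def poly_pCons poly_0
    apply (rule derivative_eq_intros has_real_derivative_jet_comp[OF assms(1)]
        has_real_derivative_jet[OF assms(2)] has_real_derivative_smooth[OF assms(2)] refl)+
    by (simp add: numeral_2_eq_2[symmetric]) algebra
qed

(* Entry k is the k-th x-derivative of the flow, for k \<le> 4; beyond that the value is junk. *)
definition flow_jet :: "real \<Rightarrow> (nat \<Rightarrow> real) \<Rightarrow> (nat \<Rightarrow> real) \<Rightarrow> nat \<Rightarrow> real" where
  "flow_jet h c u k =
    [ u 0 * u 1 + h^2 * c 0 * u 1^3,
      u 0 * u 2 + u 1^2 + h^2 * (c 1 * u 1^4 + 3 * c 0 * u 1^2 * u 2),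
      u 0 * u 3 + 3 * u 1 * u 2
        + h^2 * (c 2 * u 1^5 + 7 * c 1 * u 1^3 * u 2 + 3 * c 0 * u 1^2 * u 3 + 6 * c 0 * u 1 * u 2^2),
      u 0 * u 4 + 4 * u 1 * u 3 + 3 * u 2^2
        + h^2 * (c 3 * u 1^6 + 12 * c 2 * u 1^4 * u 2 + 10 * c 1 * u 1^3 * u 3
                 + 27 * c 1 * u 1^2 * u 2^2 + 3 * c 0 * u 1^2 * u 4 + 18 * c 0 * u 1 * u 2 * u 3
                 + 6 * c 0 * u 2^3),
      u 0 * u 5 + 5 * u 1 * u 4 + 10 * u 2 * u 3
        + h^2 * (c 4 * u 1^7 + 18 * c 3 * u 1^5 * u 2 + 22 * c 2 * u 1^4 * u 3
                 + 75 * c 2 * u 1^3 * u 2^2 + 13 * c 1 * u 1^3 * u 4 + 102 * c 1 * u 1^2 * u 2 * u 3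
                 + 3 * c 0 * u 1^2 * u 5 + 60 * c 1 * u 1 * u 2^3 + 24 * c 0 * u 1 * u 2 * u 4
                 + 18 * c 0 * u 1 * u 3^2 + 36 * c 0 * u 2^2 * u 3) ] ! k"

lemma flow_eq_flow_jet: "flow c h u y = flow_jet h (jet c (u y)) (jet u y) 0"
  by (simp add: flow_def flow_jet_def jet_def)

lemma has_real_derivative_flow_jet:
  assumes "smooth c" and "smooth u" and "k < 4"
  shows "((\<lambda>y. flow_jet h (jet c (u y)) (jet u y) k)
           has_real_derivative flow_jet h (jet c (u y)) (jet u y) (Suc k)) (at y)"
proof -
  from \<open>k < 4\<close> consider "k = 0" | "k = Suc 0" | "k = Suc (Suc 0)" | "k = Suc (Suc (Suc 0))"
    by linarith
  then show ?thesis
    by cases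
      (erule ssubst, simp only: flow_jet_def nth_Cons_0 nth_Cons_Suc,
       (rule derivative_eq_intros has_real_derivative_jet_comp[OF assms(1)]
          has_real_derivative_jet[OF assms(2)] has_real_derivative_smooth[OF assms(2)] refl)+,
       simp add: numeral_2_eq_2[symmetric], algebra)+
qed

lemma jet_add_scaled_flow:
  assumes "smooth c" and "smooth u" and "k \<le> 4"
  shows "jet (\<lambda>y. u y + s * flow c h u y) x k
           = jet u x k + s * flow_jet h (jet c (u x)) (jet u x) k"
proof -
  let ?F = "\<lambda>k y. jet u y k + s * flow_jet h (jet c (u y)) (jet u y) k"
  have "(?F k has_real_derivative ?F (Suc k) y) (at y)" if "k < 4" for k y
    using has_real_derivative_jet[OF assms(2)] has_real_derivative_flow_jet[OF assms(1,2) that]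
    by (auto intro!: derivative_eq_intros)
  then have "(deriv ^^ k) (?F 0) = ?F k"
    using assms(3) by (rule higher_deriv_eqI)
  moreover have "?F 0 = (\<lambda>y. u y + s * flow c h u y)"
    by (simp add: flow_eq_flow_jet jet_def)
  ultimately show ?thesis
    by (simp add: jet_def)
qed

definition miura_t_series :: "(nat \<Rightarrow> real) \<Rightarrow> (nat \<Rightarrow> real) \<Rightarrow> real poly" where
  "miura_t_series c u =
    [: u 0 * u 1,
       - c 1 * u 0 * u 1^3 - 2 * c 0 * u 0 * u 1 * u 2 - c 0 * u 1^3,
       4/3 * c 0 * c 2 * u 0 * u 1^5 + 4/3 * c 1^2 * u 0 * u 1^5
         + 28/3 * c 0 * c 1 * u 0 * u 1^3 * u 2 + 2 * c 0^2 * u 0 * u 1^2 * u 3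
         + 4 * c 0^2 * u 0 * u 1 * u 2^2 + 7/3 * c 0 * c 1 * u 1^5 + 4 * c 0^2 * u 1^3 * u 2,
       - 14/15 * c 0^2 * c 3 * u 0 * u 1^7 - 28/5 * c 0 * c 1 * c 2 * u 0 * u 1^7
         - 28/15 * c 1^3 * u 0 * u 1^7 - 214/15 * c 0^2 * c 2 * u 0 * u 1^5 * u 2
         - 428/15 * c 0 * c 1^2 * u 0 * u 1^5 * u 2 - 38/3 * c 0^2 * c 1 * u 0 * u 1^4 * u 3
         - 140/3 * c 0^2 * c 1 * u 0 * u 1^3 * u 2^2 - 4/3 * c 0^3 * u 0 * u 1^3 * u 4
         - 12 * c 0^3 * u 0 * u 1^2 * u 2 * u 3 - 8 * c 0^3 * u 0 * u 1 * u 2^3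
         - 34/15 * c 0^2 * c 2 * u 1^7 - 68/15 * c 0 * c 1^2 * u 1^7
         - 68/3 * c 0^2 * c 1 * u 1^5 * u 2 - 10/3 * c 0^3 * u 1^4 * u 3
         - 12 * c 0^3 * u 1^3 * u 2^2,
       16/35 * c 0^3 * c 4 * u 0 * u 1^9 + 340/63 * c 0^2 * c 1 * c 3 * u 0 * u 1^9
         + 1268/315 * c 0^2 * c 2^2 * u 0 * u 1^9
         + 5044/315 * c 0 * c 1^2 * c 2 * u 0 * u 1^9 + 836/315 * c 1^4 * u 0 * u 1^9
         + 256/21 * c 0^3 * c 3 * u 0 * u 1^7 * u 2
         + 2276/21 * c 0^2 * c 1 * c 2 * u 0 * u 1^7 * u 2
         + 1508/21 * c 0 * c 1^3 * u 0 * u 1^7 * u 2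
         + 248/15 * c 0^3 * c 2 * u 0 * u 1^6 * u 3
         + 2218/45 * c 0^2 * c 1^2 * u 0 * u 1^6 * u 3
         + 1328/15 * c 0^3 * c 2 * u 0 * u 1^5 * u 2^2
         + 3956/15 * c 0^2 * c 1^2 * u 0 * u 1^5 * u 2^2
         + 32/3 * c 0^3 * c 1 * u 0 * u 1^5 * u 4
         + 440/3 * c 0^3 * c 1 * u 0 * u 1^4 * u 2 * u 3 + 2/3 * c 0^4 * u 0 * u 1^4 * u 5
         + 544/3 * c 0^3 * c 1 * u 0 * u 1^3 * u 2^3
         + 32/3 * c 0^4 * u 0 * u 1^3 * u 2 * u 4 + 8 * c 0^4 * u 0 * u 1^3 * u 3^2
         + 48 * c 0^4 * u 0 * u 1^2 * u 2^2 * u 3 + 16 * c 0^4 * u 0 * u 1 * u 2^4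
         + 146/105 * c 0^3 * c 3 * u 1^9 + 3886/315 * c 0^2 * c 1 * c 2 * u 1^9
         + 2572/315 * c 0 * c 1^3 * u 1^9 + 82/3 * c 0^3 * c 2 * u 1^7 * u 2
         + 244/3 * c 0^2 * c 1^2 * u 1^7 * u 2 + 74/3 * c 0^3 * c 1 * u 1^6 * u 3
         + 388/3 * c 0^3 * c 1 * u 1^5 * u 2^2 + 2 * c 0^4 * u 1^5 * u 4
         + 80/3 * c 0^4 * u 1^4 * u 2 * u 3 + 32 * c 0^4 * u 1^3 * u 2^3,
       118/105 * c 0^4 * c 4 * u 1^11 + 5372/315 * c 0^3 * c 1 * c 3 * u 1^11
         + 3956/315 * c 0^3 * c 2^2 * u 1^11 + 7718/105 * c 0^2 * c 1^2 * c 2 * u 1^11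
         + 836/35 * c 0 * c 1^4 * u 1^11 + 4148/105 * c 0^4 * c 3 * u 1^9 * u 2
         + 143132/315 * c 0^3 * c 1 * c 2 * u 1^9 * u 2
         + 15506/35 * c 0^2 * c 1^3 * u 1^9 * u 2 + 844/15 * c 0^4 * c 2 * u 1^8 * u 3
         + 3298/15 * c 0^3 * c 1^2 * u 1^8 * u 3 + 6182/15 * c 0^4 * c 2 * u 1^7 * u 2^2
         + 24104/15 * c 0^3 * c 1^2 * u 1^7 * u 2^2 + 38 * c 0^4 * c 1 * u 1^7 * u 4
         + 748 * c 0^4 * c 1 * u 1^6 * u 2 * u 3 + 2 * c 0^5 * u 1^6 * u 5
         + 1416 * c 0^4 * c 1 * u 1^5 * u 2^3 + 48 * c 0^5 * u 1^5 * u 2 * u 4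
         + 36 * c 0^5 * u 1^5 * u 3^2 + 360 * c 0^5 * u 1^4 * u 2^2 * u 3
         + 240 * c 0^5 * u 1^3 * u 2^4 :]"

lemma miura_t_eq_poly:
  assumes "smooth c" and "smooth u"
  shows "miura_t c h u x = poly (miura_t_series (jet c (u x)) (jet u x)) (h^2)"
proof -
  define C J where "C = jet c (u x)" and "J = jet u x"
  let ?F = "flow_jet h C J"
  have C_J0: "C = jet c (J 0)"
    by (simp add: C_def J_def)
  have "miura c h (\<lambda>y. u y + s * flow c h u y) x
          = poly (miura_series (jet c (J 0 + s * ?F 0)) (\<lambda>k. J k + s * ?F k)) (h^2)" for s
  proof -
    have "(\<lambda>y. u y + s * flow c h u y) x = J 0 + s * ?F 0"
      by (simp add: C_def J_def flow_eq_flow_jet)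
    moreover have "jet (\<lambda>y. u y + s * flow c h u y) x k = J k + s * ?F k" if "k \<le> 4" for k
      using jet_add_scaled_flow[OF assms that] by (simp add: C_def J_def)
    ultimately show ?thesis
      unfolding miura_eq_poly
      by (intro arg_cong[where f = "\<lambda>p. poly p (h^2)"] miura_series_cong) simp_all
  qed
  then have "miura_t c h u x
          = deriv (\<lambda>s. poly (miura_series (jet c (J 0 + s * ?F 0)) (\<lambda>k. J k + s * ?F k)) (h^2)) 0"
    by (simp add: miura_t_def)
  also have "\<dots> = poly (miura_t_series C J) (h^2)"
    unfolding miura_series_def miura_t_series_def poly_pCons poly_0
    apply (rule DERIV_imp_deriv)
    apply (rule derivative_eq_intros has_real_derivative_jet_comp[OF assms(1)] refl)+
    apply (simp add: C_J0 flow_jet_def numeral_2_eq_2[symmetric])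
    by algebra
  finally show ?thesis
    by (simp add: C_def J_def)
qed

lemma coeff_miura_t_series:
  assumes "i < 5"
  shows "coeff (miura_t_series c u) i = coeff (miura_series c u * miura_x_series c u) i"
proof -
  from assms consider "i = 0" | "i = Suc 0" | "i = Suc (Suc 0)" | "i = Suc (Suc (Suc 0))"
    | "i = Suc (Suc (Suc (Suc 0)))"
    by linarith
  then show ?thesis
    by cases
      (erule ssubst,
       (simp add: coeff_mult miura_t_series_def miura_series_def miura_x_series_def; algebra?))+
qed

theorem mainTheorem5:
  fixes c u :: "real \<Rightarrow> real" and x :: real
  assumes "smooth c" and "smooth u"
  shows "(\<lambda>h. miura_t c h u x - miura c h u x * deriv (\<lambda>y. miura c h u y) x)
           \<in> O[at 0](\<lambda>h. h ^ 10)"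
proof -
  define C J where "C = jet c (u x)" and "J = jet u x"
  define P where "P = miura_t_series C J - miura_series C J * miura_x_series C J"
  have defect: "miura_t c h u x - miura c h u x * deriv (\<lambda>y. miura c h u y) x = poly P (h^2)" for h
  proof -
    have "deriv (\<lambda>y. miura c h u y) x = poly (miura_x_series C J) (h^2)"
      unfolding C_def J_def by (rule DERIV_imp_deriv[OF has_real_derivative_miura[OF assms]])
    then show ?thesis
      by (simp add: P_def C_def J_def miura_t_eq_poly[OF assms] miura_eq_poly[of c h u x])
  qed
  have "poly P \<in> O[at 0](\<lambda>e. e ^ 5)"
    by (rule poly_bigo_at_0) (simp add: P_def coeff_miura_t_series)
  then have "(\<lambda>h. poly P (h^2)) \<in> O[at 0](\<lambda>h. (h^2) ^ 5)"
    by (rule landau_o.big.compose[OF _ filterlim_power_at_0]) simp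
  then show ?thesis
    by (simp add: defect flip: power_mult)
qed

end
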